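(* Let $n \geq 2$, let $A \in \mathbb{R}^{n\times n}$ be symmetric, $b \in \mathbb{R}^n$, $c \in \mathbb{R}$, and let $C = \begin{pmatrix} A & b \\ b^\top & c \end{pmatrix}$. For $p \geq 2$, consider the problem \[ \min_{Y_1 \in \mathbb{R}^{n\times p},\, y_2 \in \mathbb{R}^p} \langle CY, Y\rangle \quad \text{subject to} \quad \|Y_1\|^2 = 1,\ \|y_2\|^2 = 1, \qquad \text{with } Y = \begin{pmatrix} Y_1 \\ y_2^\top \end{pmatrix} \in \mathbb{R}^{(n+1)\times p}. \] Then every second-order critical point of this problem is globally optimal (for all $A, b, c$).
   Context: This problem is the Burer--Monteiro factorization at rank $p$ of the SDP relaxation of the trust-region subproblem $\min_{x\in\mathbb{R}^n} x^\top A x + 2b^\top x + c$ s.t. $\|x\|^2 = 1$, namely $\min_{X} \langle C, X\rangle$ s.t. $\mathrm{trace}(X_{1:n,1:n}) = 1$, $X_{n+1,n+1} = 1$, $X \succeq 0$ (symmetric $X$ of size $n+1$), where $X = YY^\top$. Here $\langle U, V\rangle = \mathrm{trace}(U^\top V)$ and $\|\cdot\|$ is the Frobenius norm (2-norm for vectors). The feasible set $\mathcal{M} = \{Y : \|Y_1\|^2 = 1, \|y_2\|^2 = 1\}$ is a smooth submanifold of $\mathbb{R}^{(n+1)\times p}$, and with cost $g(Y) = \langle CY, Y\rangle$, a point $Y \in \mathcal{M}$ is second-order critical if its Riemannian gradient vanishes and its Riemannian Hessian is positive semidefinite on the tangent space. Globally optimal points $Y$ map to globally optimal $X = YY^\top$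 of the SDP. *)

theory Defs
  imports "HOL-Analysis.Analysis"
begin

text \<open>Matrices in R^((n+1) x p) are represented as real^'p::finite^('n::finite + unit):
  rows Inl i (i :: 'n) form the block Y1, the row Inr () is y2^T.
  The inner product on real^'p::finite^'m is the Frobenius inner product trace(U^T V).\<close>

definition blockC :: "real^'n::finite^'n \<Rightarrow> real^'n \<Rightarrow> real \<Rightarrow> real^('n::finite + unit)^('n::finite + unit)" where
  "blockC A b c = (\<chi> r s. (case r of
      Inl i \<Rightarrow> (case s of Inl j \<Rightarrow> A $ i $ j | Inr _ \<Rightarrow> b $ i)
    | Inr _ \<Rightarrow> (case s of Inl j \<Rightarrow> b $ j | Inr _ \<Rightarrow> c)))"

definition blk1_inner :: "real^'p::finite^('n::finite + unit) \<Rightarrow> real^'p::finite^('n::finite + unit) \<Rightarrow> real" where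
  "blk1_inner Y V = (\<Sum>i\<in>UNIV. (Y $ Inl i) \<bullet> (V $ Inl i))"

definition blk2_inner :: "real^'p::finite^('n::finite + unit) \<Rightarrow> real^'p::finite^('n::finite + unit) \<Rightarrow> real" where
  "blk2_inner Y V = (Y $ Inr ()) \<bullet> (V $ Inr ())"

definition BMmanifold :: "(real^'p::finite^('n::finite + unit)) set" where
  "BMmanifold = {Y. blk1_inner Y Y = 1 \<and> blk2_inner Y Y = 1}"

definition tangent_space :: "real^'p::finite^('n::finite + unit) \<Rightarrow> (real^'p::finite^('n::finite + unit)) set" where
  "tangent_space Y = {V. blk1_inner Y V = 0 \<and> blk2_inner Y V = 0}"

definition proj_tangent :: "real^'p::finite^('n::finite + unit) \<Rightarrow> real^'p::finite^('n::finite + unit) \<Rightarrow> real^'p::finite^('n::finite + unit)" where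
  "proj_tangent Y V = (\<chi> r. case r of
      Inl _ \<Rightarrow> V $ r - blk1_inner Y V *\<^sub>R Y $ r
    | Inr _ \<Rightarrow> V $ r - blk2_inner Y V *\<^sub>R Y $ r)"

definition bm_cost :: "real^('n::finite + unit)^('n::finite + unit) \<Rightarrow> real^'p::finite^('n::finite + unit) \<Rightarrow> real" where
  "bm_cost C Y = (C ** Y) \<bullet> Y"

definition egrad :: "real^('n::finite + unit)^('n::finite + unit) \<Rightarrow> real^'p::finite^('n::finite + unit) \<Rightarrow> real^'p::finite^('n::finite + unit)" where
  "egrad C Y = 2 *\<^sub>R (C ** Y)"

definition ehess :: "real^('n::finite + unit)^('n::finite + unit) \<Rightarrow> real^'p::finite^('n::finite + unit) \<Rightarrow> real^'p::finite^('n::finite + unit)" where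
  "ehess C V = 2 *\<^sub>R (C ** V)"

definition rgrad :: "real^('n::finite + unit)^('n::finite + unit) \<Rightarrow> real^'p::finite^('n::finite + unit) \<Rightarrow> real^'p::finite^('n::finite + unit)" where
  "rgrad C Y = proj_tangent Y (egrad C Y)"

text \<open>Riemannian Hessian on the product of spheres (embedded submanifold, Weingarten term):
  Hess g(Y)[V] = Proj_Y(ehess[V]) - (<Y1,G1> V1 ; <y2,g2> v2^T), with G = egrad C Y.\<close>
definition rhess :: "real^('n::finite + unit)^('n::finite + unit) \<Rightarrow> real^'p::finite^('n::finite + unit) \<Rightarrow> real^'p::finite^('n::finite + unit) \<Rightarrow> real^'p::finite^('n::finite + unit)" where
  "rhess C Y V = proj_tangent Y (ehess C V) -
     (\<chi> r. case r of
        Inl _ \<Rightarrow> blk1_inner Y (egrad C Y) *\<^sub>R V $ r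
      | Inr _ \<Rightarrow> blk2_inner Y (egrad C Y) *\<^sub>R V $ r)"

definition second_order_critical :: "real^('n::finite + unit)^('n::finite + unit) \<Rightarrow> real^'p::finite^('n::finite + unit) \<Rightarrow> bool" where
  "second_order_critical C Y \<longleftrightarrow> Y \<in> BMmanifold \<and> rgrad C Y = 0 \<and>
     (\<forall>V\<in>tangent_space Y. V \<bullet> rhess C Y V \<ge> 0)"

definition globally_optimal :: "real^('n::finite + unit)^('n + unit) \<Rightarrow> real^'p::finite^('n + unit) \<Rightarrow> bool" where
  "globally_optimal C Y \<longleftrightarrow> Y \<in> BMmanifold \<and> (\<forall>Z\<in>(BMmanifold :: (real^'p^('n + unit)) set). bm_cost C Y \<le> bm_cost C Z)"

end

theory Submission
  imports Defs
begin

(*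
  Put mu1 = <Y1, (CY)1>, mu2 = <y2, (CY)2> and S = C - diag(mu1 I_n, mu2), the candidate dual
  certificate. A vanishing Riemannian gradient says exactly S Y = 0, and on a tangent vector V
  the Riemannian Hessian form is 2 <S V, V>. Given u in R^(n+1), the hypothesis p >= 2 yields
  z <> 0 orthogonal to Y1^T u1 - u_(n+1) y2; then V = u z^T - t Y is tangent for a suitable t,
  and since S Y = 0 and S is symmetric, 0 <= <S V, V> = |z|^2 u^T S u. Hence S is positive
  semidefinite, and on the manifold g(Z) = <S Z, Z> + mu1 + mu2 >= mu1 + mu2 = g(Y).
*)

lemma matrix_diff_rdistrib: "(A - B) ** C = A ** C - B ** (C :: 'a::ring_1^_^_)"
  by (simp add: matrix_matrix_mult_def vec_eq_iff sum_subtractf left_diff_distrib)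

lemma inner_matrix_mult_columns:
  fixes S :: "real^'m::finite^'m" and X W :: "real^'p::finite^'m"
  shows "(S ** X) \<bullet> W = (\<Sum>k\<in>UNIV. (S *v column k X) \<bullet> column k W)"
  unfolding inner_vec_def matrix_matrix_mult_def matrix_vector_mult_def column_def
  by (simp add: sum_distrib_right) (rule sum.swap)

lemma inner_matrix_mult_commute:
  fixes S :: "real^'m::finite^'m" and X W :: "real^'p::finite^'m"
  assumes "transpose S = S"
  shows "(S ** X) \<bullet> W = (S ** W) \<bullet> X"
proof -
  have "(S *v x) \<bullet> w = (S *v w) \<bullet> x" for x w :: "real^'m"
    by (metis assms dot_lmul_matrix inner_commute transpose_matrix_vector)
  then show ?thesis by (simp add: inner_matrix_mult_columns)
qed

lemma inner_matrix_mult_rank_one: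
  fixes S :: "real^'m::finite^'m" and u :: "real^'m" and z :: "real^'p::finite"
  shows "(S ** (\<chi> r. u $ r *\<^sub>R z)) \<bullet> (\<chi> r. u $ r *\<^sub>R z) = (z \<bullet> z) * ((S *v u) \<bullet> u)"
proof -
  have "column k (\<chi> r. u $ r *\<^sub>R z) = z $ k *\<^sub>R u" for k
    by (simp add: column_def vec_eq_iff mult.commute)
  then show ?thesis
    by (simp add: inner_matrix_mult_columns matrix_vector_mult_scaleR inner_vec_def[of z z]
        sum_distrib_right mult.assoc)
qed

lemma psd_imp_inner_matrix_mult_nonneg:
  fixes S :: "real^'m::finite^'m" and Z :: "real^'p::finite^'m"
  assumes "\<And>u. 0 \<le> (S *v u) \<bullet> u"
  shows "0 \<le> (S ** Z) \<bullet> Z"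
  by (simp add: inner_matrix_mult_columns assms sum_nonneg)

lemma sum_UNIV_Plus_unit:
  "sum f (UNIV :: ('a::finite + unit) set) = (\<Sum>i\<in>UNIV. f (Inl i)) + f (Inr ())"
proof -
  have "sum f (UNIV :: ('a + unit) set) = sum f (UNIV <+> UNIV)" by simp
  also have "\<dots> = sum (f \<circ> Inl) UNIV + sum (f \<circ> Inr) (UNIV :: unit set)"
    by (rule sum.Plus) auto
  finally show ?thesis by (simp add: UNIV_unit)
qed

definition block_diag :: "real \<Rightarrow> real \<Rightarrow> real^('n::finite + unit)^('n + unit)" where
  "block_diag a d = (\<chi> r s. if r = s then (case r of Inl _ \<Rightarrow> a | Inr _ \<Rightarrow> d) else 0)"

lemma block_diag_mult:
  "block_diag a d ** Z = (\<chi> r. case r of Inl _ \<Rightarrow> a *\<^sub>R Z $ r | Inr _ \<Rightarrow> d *\<^sub>R Z $ r)"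
  by (simp add: block_diag_def matrix_matrix_mult_def vec_eq_iff if_distrib if_distribR
      cong: if_cong split: sum.split)

lemma inner_block_diag_mult:
  "(block_diag a d ** Z) \<bullet> W = a * blk1_inner Z W + d * blk2_inner Z W"
  by (simp add: block_diag_mult inner_vec_def[of _ W] sum_UNIV_Plus_unit blk1_inner_def
      blk2_inner_def sum_distrib_left)

lemma transpose_blockC:
  assumes "transpose A = A"
  shows "transpose (blockC A b c) = blockC A b c"
proof -
  have "A $ j $ i = A $ i $ j" for i j
    by (metis assms transpose_def vec_lambda_beta)
  then show ?thesis
    by (simp add: blockC_def transpose_def vec_eq_iff split: sum.split)
qed

definition dual_certificate ::
  "real^('n::finite + unit)^('n + unit) \<Rightarrow> real^'p::finite^('n + unit) \<Rightarrow> real^('n + unit)^('n + unit)"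
where
  "dual_certificate C Y = C - block_diag (blk1_inner Y (C ** Y)) (blk2_inner Y (C ** Y))"

lemma proj_tangent_eq: "proj_tangent Y V = V - block_diag (blk1_inner Y V) (blk2_inner Y V) ** Y"
  by (simp add: proj_tangent_def block_diag_mult vec_eq_iff split: sum.split)

lemma blk_inner_egrad:
  "blk1_inner Y (egrad C Y) = 2 * blk1_inner Y (C ** Y)"
  "blk2_inner Y (egrad C Y) = 2 * blk2_inner Y (C ** Y)"
  by (simp_all add: egrad_def blk1_inner_def blk2_inner_def sum_distrib_left)

lemma rgrad_eq_dual_certificate: "rgrad C Y = 2 *\<^sub>R (dual_certificate C Y ** Y)"
  by (simp add: rgrad_def proj_tangent_eq blk_inner_egrad dual_certificate_def block_diag_mult
      matrix_diff_rdistrib vec_eq_iff algebra_simps split: sum.split) (simp add: egrad_def)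

lemma inner_rhess_tangent:
  assumes "V \<in> tangent_space Y"
  shows "V \<bullet> rhess C Y V = 2 * ((dual_certificate C Y ** V) \<bullet> V)"
proof -
  have "(proj_tangent Y W) \<bullet> V = W \<bullet> V" for W
    using assms by (simp add: proj_tangent_eq inner_diff_left inner_block_diag_mult tangent_space_def)
  then have "V \<bullet> rhess C Y V = ehess C V \<bullet> V
      - (block_diag (blk1_inner Y (egrad C Y)) (blk2_inner Y (egrad C Y)) ** V) \<bullet> V"
    by (simp add: rhess_def block_diag_mult inner_diff_left inner_commute[of V])
  then show ?thesis
    by (simp add: dual_certificate_def ehess_def matrix_diff_rdistrib inner_diff_left
        inner_block_diag_mult blk_inner_egrad)
qed

lemma transpose_dual_certificate:
  assumes "transpose C = C"
  shows "transpose (dual_certificate C Y) = dual_certificate C Y"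
  using assms by (simp add: dual_certificate_def block_diag_def transpose_def vec_eq_iff)

lemma bm_cost_eq_dual_certificate:
  assumes "Z \<in> BMmanifold"
  shows "bm_cost C Z = (dual_certificate C Y ** Z) \<bullet> Z + blk1_inner Y (C ** Y) + blk2_inner Y (C ** Y)"
  using assms by (simp add: bm_cost_def dual_certificate_def matrix_diff_rdistrib inner_diff_left
      inner_block_diag_mult BMmanifold_def)

lemma nonneg_on_tangent_space_imp_psd:
  fixes S :: "real^('n::finite + unit)^('n + unit)" and Y :: "real^'p::finite^('n + unit)"
  assumes "CARD('p) \<ge> 2" and "Y \<in> BMmanifold" and "transpose S = S" and "S ** Y = 0"
    and "\<And>V. V \<in> tangent_space Y \<Longrightarrow> 0 \<le> (S ** V) \<bullet> V"
  shows "0 \<le> (S *v u) \<bullet> u"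
proof -
  define w where "w = (\<Sum>i\<in>UNIV. u $ Inl i *\<^sub>R Y $ Inl i) - u $ Inr () *\<^sub>R Y $ Inr ()"
  obtain z where "z \<noteq> 0" and "orthogonal w z"
    using orthogonal_to_vector_exists[of w] assms(1) by auto
  define U :: "real^'p^('n + unit)" where "U = (\<chi> r. u $ r *\<^sub>R z)"
  define t where "t = u $ Inr () * (Y $ Inr () \<bullet> z)"
  define V where "V = U - t *\<^sub>R Y"
  have Y_unit: "blk1_inner Y Y = 1" "blk2_inner Y Y = 1"
    using assms(2) by (auto simp: BMmanifold_def)
  have "(\<Sum>i\<in>UNIV. u $ Inl i * (Y $ Inl i \<bullet> z)) = t"
    using \<open>orthogonal w z\<close> by (simp add: orthogonal_def w_def t_def inner_diff_left inner_sum_left)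
  moreover have "blk1_inner Y V = (\<Sum>i\<in>UNIV. u $ Inl i * (Y $ Inl i \<bullet> z)) - t * blk1_inner Y Y"
    by (simp add: V_def U_def blk1_inner_def inner_diff_right sum_subtractf sum_distrib_left)
  moreover have "blk2_inner Y V = t - t * blk2_inner Y Y"
    by (simp add: V_def U_def t_def blk2_inner_def inner_diff_right)
  ultimately have "V \<in> tangent_space Y"
    by (simp add: tangent_space_def Y_unit)
  then have "0 \<le> (S ** V) \<bullet> V" by (rule assms(5))
  also have "(S ** V) \<bullet> V = (S ** U) \<bullet> U"
  proof -
    have "S ** V = S ** U - t *\<^sub>R (S ** Y)"
      by (simp add: V_def matrix_matrix_mult_def vec_eq_iff algebra_simps sum_subtractf sum_distrib_left)
    moreover have "(S ** U) \<bullet> Y = 0"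
      using assms(3,4) inner_matrix_mult_commute by (metis inner_zero_left)
    ultimately show ?thesis by (simp add: assms(4) V_def inner_diff_right)
  qed
  also have "\<dots> = (z \<bullet> z) * ((S *v u) \<bullet> u)"
    by (simp add: U_def inner_matrix_mult_rank_one)
  finally show ?thesis
    using \<open>z \<noteq> 0\<close> by (metis inner_gt_zero_iff zero_le_mult_iff not_le)
qed

lemma globally_optimal_if_dual_certificate_psd:
  fixes C :: "real^('n::finite + unit)^('n + unit)" and Y :: "real^'p::finite^('n + unit)"
  assumes "Y \<in> BMmanifold" and "dual_certificate C Y ** Y = 0"
    and "\<And>u. 0 \<le> (dual_certificate C Y *v u) \<bullet> u"
  shows "globally_optimal C Y"
  unfolding globally_optimal_def
proof (intro conjI ballI assms(1))
  fix Z :: "real^'p^('n + unit)"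
  assume "Z \<in> BMmanifold"
  then show "bm_cost C Y \<le> bm_cost C Z"
    using bm_cost_eq_dual_certificate[where Y = Y, OF assms(1)]
      bm_cost_eq_dual_certificate[where Y = Y, OF \<open>Z \<in> BMmanifold\<close>]
      psd_imp_inner_matrix_mult_nonneg[OF assms(3), of Z]
    by (simp add: assms(2))
qed

theorem corollary5:
  fixes A :: "real^'n^'n" and b :: "real^'n" and c :: real
    and Y :: "real^'p^('n + unit)"
  assumes "CARD('n) \<ge> 2" and "CARD('p) \<ge> 2"
    and "transpose A = A"
    and "second_order_critical (blockC A b c) Y"
  shows "globally_optimal (blockC A b c) Y"
proof -
  let ?S = "dual_certificate (blockC A b c) Y"
  have Y: "Y \<in> BMmanifold" and "rgrad (blockC A b c) Y = 0"
    and hess: "\<And>V. V \<in> tangent_space Y \<Longrightarrow> 0 \<le> V \<bullet> rhess (blockC A b c) Y V"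
    using assms(4) by (auto simp: second_order_critical_def)
  then have first_order: "?S ** Y = 0"
    by (simp add: rgrad_eq_dual_certificate)
  have "transpose ?S = ?S"
    by (simp add: transpose_dual_certificate transpose_blockC assms(3))
  moreover have "0 \<le> (?S ** V) \<bullet> V" if "V \<in> tangent_space Y" for V
    using hess[OF that] by (simp add: inner_rhess_tangent[OF that])
  ultimately have "0 \<le> (?S *v u) \<bullet> u" for u
    by (rule nonneg_on_tangent_space_imp_psd[OF assms(2) Y _ first_order])
  then show ?thesis
    by (rule globally_optimal_if_dual_certificate_psd[OF Y first_order])
qed

end
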